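(* If $k\in\mathbb{N}$, $k\ge2$, and $u(x)=e^{ix^{2k}}$, $x\in\mathbb{R}$, then $$WF(u)=\{0\}\times(\mathbb{R}\setminus\{0\}).$$
   Context: $WF$ is the Gabor wave front set: for $u\in\mathscr{S}'(\mathbb{R})$, $z_0\in T^*\mathbb{R}\setminus\{0\}$ is not in $WF(u)$ iff there is an open conic set $\Gamma\ni z_0$ with $\sup_{z\in\Gamma}\langle z\rangle^N|V_\varphi u(z)|<\infty$ for all $N\ge0$, where $V_\varphi u(x,\xi)=\int u(y)\overline{\varphi(y-x)}e^{-iy\xi}dy$, $\varphi\in\mathscr{S}(\mathbb{R})\setminus\{0\}$. *)

theory Defs
  imports "HOL-Analysis.Analysis"
begin

definition nth_deriv :: "nat \<Rightarrow> (real \<Rightarrow> complex) \<Rightarrow> real \<Rightarrow> complex" where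
  "nth_deriv n f = ((\<lambda>g x. vector_derivative g (at x)) ^^ n) f"

definition schwartz :: "(real \<Rightarrow> complex) \<Rightarrow> bool" where
  "schwartz f \<longleftrightarrow>
     (\<forall>n x. nth_deriv n f differentiable (at x)) \<and>
     (\<forall>a b::nat. \<exists>C. \<forall>x. \<bar>x\<bar> ^ a * norm (nth_deriv b f x) \<le> C)"

definition stft :: "(real \<Rightarrow> complex) \<Rightarrow> (real \<Rightarrow> complex) \<Rightarrow> real \<times> real \<Rightarrow> complex" where
  "stft \<phi> u z = (LINT y|lborel. u y * cnj (\<phi> (y - fst z)) * exp (- \<i> * complex_of_real (y * snd z)))"

definition conic :: "(real \<times> real) set \<Rightarrow> bool" where
  "conic \<Gamma> \<longleftrightarrow> (\<forall>z\<in>\<Gamma>. \<forall>t::real. t > 0 \<longrightarrow> t *\<^sub>R z \<in> \<Gamma>)"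

definition gabor_WF :: "(real \<Rightarrow> complex) \<Rightarrow> (real \<Rightarrow> complex) \<Rightarrow> (real \<times> real) set" where
  "gabor_WF \<phi> u = {z0. z0 \<noteq> 0 \<and>
     \<not> (\<exists>\<Gamma>. open \<Gamma> \<and> conic \<Gamma> \<and> z0 \<in> \<Gamma> \<and>
          (\<forall>N::real. N \<ge> 0 \<longrightarrow>
             (\<exists>C. \<forall>z\<in>\<Gamma>. (sqrt (1 + (norm z)\<^sup>2)) powr N * norm (stft \<phi> u z) \<le> C)))}"

end

theory Submission
  imports Defs "HOL-Probability.Probability" "HOL-Real_Asymp.Real_Asymp"
begin

text \<open>The short-time Fourier transform of \<open>u\<close> at \<open>(x, \<xi>)\<close> is the oscillatory integral
  \<open>\<integral> exp (i (y^(2k) - y \<xi>)) cnj (\<phi> (y - x)) dy\<close>, whose phase is stationary only near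
  \<open>\<xi> = 2k x^(2k-1)\<close>. Where \<open>\<bar>2k x^(2k-1) - \<xi>\<bar> \<ge> k \<bar>x\<bar>^(2k-1)\<close>, integrating by parts against the phase
  (with \<open>y^(2k-1)\<close> expanded around \<open>x\<close>) gains a factor \<open>1/\<bar>x\<bar>\<close> at each step. A narrow cone around
  a point \<open>(x0, \<xi>0)\<close> with \<open>x0 \<noteq> 0\<close> lies in this region for large \<open>\<bar>x\<bar>\<close>, so such points are regular.

  Conversely, rapid decay in a cone around \<open>(0, \<eta>)\<close> would make the transform \<open>O(X^(-2k))\<close> along the
  line \<open>x = \<plusminus>X\<close>, uniformly in \<open>\<xi>\<close>, because the frequencies outside the cone are non-stationary.
  But \<open>y \<mapsto> u y * cnj (\<phi> (y - x))\<close> has modulus \<open>\<bar>\<phi> s0\<bar>\<close> at \<open>y = x + s0\<close> and Lipschitz constant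
  \<open>O(X^(2k-1))\<close>; smoothing it with a Gaussian and optimising the width gives
  \<open>\<bar>\<phi> s0\<bar>\<^sup>2 = O(X^(2k-1) / X^(2k))\<close>, which is absurd for large \<open>X\<close>.\<close>

section \<open>Schwartz windows\<close>

lemma nth_deriv_0 [simp]: "nth_deriv 0 f = f"
  by (simp add: nth_deriv_def)

lemma nth_deriv_Suc: "nth_deriv (Suc n) f = (\<lambda>x. vector_derivative (nth_deriv n f) (at x))"
  by (simp add: nth_deriv_def)

lemma schwartz_has_vector_derivative:
  assumes "schwartz f"
  shows "(nth_deriv n f has_vector_derivative nth_deriv (Suc n) f x) (at x within S)"
proof -
  have "nth_deriv n f differentiable (at x)"
    using assms by (simp add: schwartz_def)
  then show ?thesis
    by (simp add: nth_deriv_Suc vector_derivative_works has_vector_derivative_at_within)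
qed

lemma schwartz_weighted_bound:
  assumes "schwartz f"
  shows "\<exists>C. \<forall>t. (1 + \<bar>t\<bar>) ^ a * norm (nth_deriv b f t) \<le> C"
proof -
  obtain C1 where C1: "\<And>t. \<bar>t\<bar> ^ a * norm (nth_deriv b f t) \<le> C1"
    using assms schwartz_def by blast
  obtain C0 where C0: "\<And>t. \<bar>t\<bar> ^ 0 * norm (nth_deriv b f t) \<le> C0"
    using assms schwartz_def by blast
  have "(1 + \<bar>t\<bar>) ^ a * norm (nth_deriv b f t) \<le> 2 ^ a * (C0 + C1)" for t
  proof -
    have "(1 + \<bar>t\<bar>) ^ a \<le> 2 ^ a * (1 + \<bar>t\<bar> ^ a)"
    proof (cases "\<bar>t\<bar> \<le> 1")
      case True
      then have "(1 + \<bar>t\<bar>) ^ a \<le> 2 ^ a"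
        using power_mono[of "1 + \<bar>t\<bar>" 2 a] by auto
      then show ?thesis
        by (simp add: distrib_left add_increasing2)
    next
      case False
      then have "(1 + \<bar>t\<bar>) ^ a \<le> (2 * \<bar>t\<bar>) ^ a"
        using power_mono[of "1 + \<bar>t\<bar>" "2 * \<bar>t\<bar>" a] by auto
      then show ?thesis
        by (simp add: power_mult_distrib distrib_left add_increasing)
    qed
    then have "(1 + \<bar>t\<bar>) ^ a * norm (nth_deriv b f t) \<le> 2 ^ a * (1 + \<bar>t\<bar> ^ a) * norm (nth_deriv b f t)"
      by (rule mult_right_mono) simp
    also have "\<dots> = 2 ^ a * (\<bar>t\<bar> ^ 0 * norm (nth_deriv b f t) + \<bar>t\<bar> ^ a * norm (nth_deriv b f t))"
      by (simp add: algebra_simps)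
    also have "\<dots> \<le> 2 ^ a * (C0 + C1)"
      using C0 C1 by (intro mult_left_mono add_mono) auto
    finally show ?thesis .
  qed
  then show ?thesis by blast
qed

definition window_moment :: "(real \<Rightarrow> complex) \<Rightarrow> nat \<Rightarrow> nat \<Rightarrow> real \<Rightarrow> complex" where
  "window_moment f j n t = complex_of_real t ^ j * cnj (nth_deriv n f t)"

lemma window_moment_bound:
  assumes "schwartz f"
  shows "\<exists>C. \<forall>t. norm (window_moment f j n t) \<le> C * inverse (1 + t\<^sup>2)"
proof -
  obtain C where C: "\<And>t. (1 + \<bar>t\<bar>) ^ (j + 2) * norm (nth_deriv n f t) \<le> C"
    using schwartz_weighted_bound[OF assms] by blast
  have "norm (window_moment f j n t) \<le> C * inverse (1 + t\<^sup>2)" for t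
  proof -
    have "norm (window_moment f j n t) * (1 + t\<^sup>2) = \<bar>t\<bar> ^ j * norm (nth_deriv n f t) * (1 + t\<^sup>2)"
      by (simp add: window_moment_def norm_mult norm_power)
    also have "\<dots> \<le> (1 + \<bar>t\<bar>) ^ j * norm (nth_deriv n f t) * (1 + \<bar>t\<bar>)\<^sup>2"
      by (intro mult_mono power_mono) (auto simp: power2_eq_square algebra_simps)
    also have "\<dots> = (1 + \<bar>t\<bar>) ^ (j + 2) * norm (nth_deriv n f t)"
      by (simp add: power_add power2_eq_square mult_ac)
    also have "\<dots> \<le> C" by (rule C)
    finally show ?thesis
      by (simp add: field_simps add_pos_nonneg)
  qed
  then show ?thesis by blast
qed

lemma window_moment_has_vector_derivative:
  assumes "schwartz f"
  shows "(window_moment f j n has_vector_derivative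
           of_nat j * window_moment f (j - 1) n t + window_moment f j (Suc n) t) (at t within S)"
proof -
  have "((\<lambda>t. of_real (t ^ j) :: complex) has_vector_derivative of_real (real j * t ^ (j - 1))) (at t within S)"
    by (intro has_vector_derivative_of_real) (auto intro: derivative_eq_intros)
  then have "((\<lambda>t. of_real (t ^ j) * cnj (nth_deriv n f t)) has_vector_derivative
      of_real (t ^ j) * cnj (nth_deriv (Suc n) f t) + of_real (real j * t ^ (j - 1)) * cnj (nth_deriv n f t))
      (at t within S)"
    by (intro has_vector_derivative_mult has_vector_derivative_cnj schwartz_has_vector_derivative assms)
  then show ?thesis
    by (simp add: window_moment_def[abs_def] algebra_simps)
qed

lemma window_moment_continuous_on: "schwartz f \<Longrightarrow> continuous_on S (window_moment f j n)"
  by (rule continuous_on_vector_derivative) (rule window_moment_has_vector_derivative)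

lemma window_moment_shift_has_vector_derivative:
  assumes "schwartz f"
  shows "((\<lambda>y. window_moment f j n (y - x)) has_vector_derivative
      of_nat j * window_moment f (j - 1) n (y - x) + window_moment f j (Suc n) (y - x)) (at y)"
proof -
  have "((\<lambda>y. y - x) has_vector_derivative 1) (at y)"
    by (rule derivative_eq_intros refl | simp)+
  from vector_diff_chain_at[OF this window_moment_has_vector_derivative[OF assms]]
  show ?thesis by (simp add: o_def)
qed

lemma integrable_inverse_1_plus_square_shift:
  "integrable lborel (\<lambda>y::real. inverse (1 + (y - x)\<^sup>2))"
proof -
  have "integrable lborel (\<lambda>y::real. inverse (1 + y\<^sup>2))"
    using integrable_inverse_1_plus_square by (simp add: set_integrable_def)
  from lborel_integrable_real_affine[OF this, of 1 "- x"] show ?thesis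
    by simp
qed

lemma integral_inverse_1_plus_square_shift:
  "(\<integral>y. inverse (1 + (y - x)\<^sup>2) \<partial>lborel) = pi"
proof -
  have "(\<integral>y. inverse (1 + y\<^sup>2) \<partial>lborel) = pi"
    using LBINT_inverse_1_plus_square
    by (simp add: interval_lebesgue_integral_def set_lebesgue_integral_def)
  with lborel_integral_real_affine[of 1 "\<lambda>y. inverse (1 + y\<^sup>2)" "- x"] show ?thesis
    by simp
qed

lemma integral_eq_0_of_has_vector_derivative:
  fixes F f :: "real \<Rightarrow> 'a::euclidean_space"
  assumes F: "\<And>x. (F has_vector_derivative f x) (at x)"
    and f: "continuous_on UNIV f" "integrable lborel f"
    and top: "(F \<longlongrightarrow> 0) at_top" and bot: "(F \<longlongrightarrow> 0) at_bot"
  shows "integral\<^sup>L lborel f = 0"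
proof -
  have FTC: "integral\<^sup>L lborel (\<lambda>x. indicator {- real n..real n} x *\<^sub>R f x) = F (real n) - F (- real n)" for n
    by (rule integral_FTC_atLeastAtMost)
      (auto intro: has_vector_derivative_at_within F continuous_on_subset[OF f(1)])
  have "(\<lambda>n. integral\<^sup>L lborel (\<lambda>x. indicator {- real n..real n} x *\<^sub>R f x)) \<longlonglongrightarrow> integral\<^sup>L lborel f"
  proof (rule integral_dominated_convergence[where w="\<lambda>x. norm (f x)"])
    show "AE x in lborel. (\<lambda>n. indicator {- real n..real n} x *\<^sub>R f x) \<longlonglongrightarrow> f x"
    proof (rule AE_I2)
      fix x :: real
      obtain N :: nat where "\<bar>x\<bar> \<le> real N"
        using real_arch_simple by blast
      then have "\<forall>n\<ge>N. indicator {- real n..real n} x *\<^sub>R f x = f x"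
        by (auto simp: indicator_def)
      then show "(\<lambda>n. indicator {- real n..real n} x *\<^sub>R f x) \<longlonglongrightarrow> f x"
        by (intro tendsto_eventually) (auto simp: eventually_sequentially)
    qed
    show "integrable lborel (\<lambda>x. norm (f x))" "f \<in> borel_measurable lborel"
      using f(2) by auto
    then show "(\<lambda>x. indicator {- real n..real n} x *\<^sub>R f x) \<in> borel_measurable lborel" for n
      by measurable
    show "AE x in lborel. norm (indicator {- real n..real n} x *\<^sub>R f x) \<le> norm (f x)" for n
      by (auto simp: indicator_def)
  qed
  moreover have "(\<lambda>n. F (real n) - F (- real n)) \<longlonglongrightarrow> 0 - 0"
    by (intro tendsto_diff filterlim_compose[OF top filterlim_real_sequentially]
        filterlim_compose[OF bot filterlim_compose[OF filterlim_uminus_at_bot_at_top filterlim_real_sequentially]])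
  ultimately show ?thesis
    using LIMSEQ_unique FTC by fastforce
qed

section \<open>Non-stationary phase\<close>

definition chirp :: "nat \<Rightarrow> real \<Rightarrow> real \<Rightarrow> complex" where
  "chirp k \<xi> y = exp (\<i> * complex_of_real (y ^ (2 * k) - y * \<xi>))"

definition osc_integrand ::
    "(real \<Rightarrow> complex) \<Rightarrow> nat \<Rightarrow> nat \<Rightarrow> nat \<Rightarrow> real \<Rightarrow> real \<Rightarrow> real \<Rightarrow> complex" where
  "osc_integrand f k j n x \<xi> y = chirp k \<xi> y * window_moment f j n (y - x)"

definition osc_integral :: "(real \<Rightarrow> complex) \<Rightarrow> nat \<Rightarrow> nat \<Rightarrow> nat \<Rightarrow> real \<Rightarrow> real \<Rightarrow> complex" where
  "osc_integral f k j n x \<xi> = (\<integral>y. osc_integrand f k j n x \<xi> y \<partial>lborel)"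

lemma norm_chirp [simp]: "norm (chirp k \<xi> y) = 1"
  unfolding chirp_def by (rule norm_exp_i_times)

lemma chirp_has_vector_derivative:
  "(chirp k \<xi> has_vector_derivative \<i> * of_real (real (2 * k) * y ^ (2 * k - 1) - \<xi>) * chirp k \<xi> y) (at y)"
proof -
  let ?h = "\<lambda>z::complex. exp (\<i> * (z ^ (2 * k) - z * of_real \<xi>))"
  have "(?h has_field_derivative
      ?h (of_real y) * (\<i> * (of_nat (2 * k) * of_real y ^ (2 * k - 1) - of_real \<xi>))) (at (of_real y))"
    by (rule derivative_eq_intros refl | simp)+
  from has_vector_derivative_real_field[OF this] show ?thesis
    by (simp add: chirp_def[abs_def] mult_ac)
qed

lemma osc_integrand_continuous_on: "schwartz f \<Longrightarrow> continuous_on S (osc_integrand f k j n x \<xi>)"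
  unfolding osc_integrand_def[abs_def] chirp_def
  by (intro continuous_intros continuous_on_compose2[OF window_moment_continuous_on]) auto

lemma osc_integrand_bound:
  assumes "schwartz f"
  shows "\<exists>C. \<forall>x \<xi> y. norm (osc_integrand f k j n x \<xi> y) \<le> C * inverse (1 + (y - x)\<^sup>2)"
proof -
  obtain C where "\<And>t. norm (window_moment f j n t) \<le> C * inverse (1 + t\<^sup>2)"
    using window_moment_bound[OF assms] by blast
  then show ?thesis
    by (auto simp: osc_integrand_def norm_mult)
qed

lemma integrable_osc_integrand:
  assumes "schwartz f"
  shows "integrable lborel (osc_integrand f k j n x \<xi>)"
proof -
  obtain C where C: "\<And>y. norm (osc_integrand f k j n x \<xi> y) \<le> C * inverse (1 + (y - x)\<^sup>2)"
    using osc_integrand_bound[OF assms] by blast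
  show ?thesis
  proof (rule Bochner_Integration.integrable_bound)
    show "integrable lborel (\<lambda>y. C * inverse (1 + (y - x)\<^sup>2))"
      using integrable_inverse_1_plus_square_shift by simp
    show "osc_integrand f k j n x \<xi> \<in> borel_measurable lborel"
      using osc_integrand_continuous_on[OF assms] by (simp add: borel_measurable_continuous_onI)
    show "AE y in lborel. norm (osc_integrand f k j n x \<xi> y) \<le> norm (C * inverse (1 + (y - x)\<^sup>2))"
      using C by (auto intro: order_trans[OF _ abs_ge_self])
  qed
qed

lemma osc_integral_bounded:
  assumes "schwartz f"
  shows "\<exists>C. \<forall>x \<xi>. norm (osc_integral f k j n x \<xi>) \<le> C"
proof -
  obtain C where C: "\<And>x \<xi> y. norm (osc_integrand f k j n x \<xi> y) \<le> C * inverse (1 + (y - x)\<^sup>2)"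
    using osc_integrand_bound[OF assms] by blast
  have "norm (osc_integral f k j n x \<xi>) \<le> C * pi" for x \<xi>
  proof -
    have "norm (osc_integral f k j n x \<xi>) \<le> (\<integral>y. C * inverse (1 + (y - x)\<^sup>2) \<partial>lborel)"
      unfolding osc_integral_def
      by (rule Bochner_Integration.integral_norm_bound_integral)
        (use integrable_osc_integrand[OF assms] integrable_inverse_1_plus_square_shift C in auto)
    also have "\<dots> = C * pi"
      by (simp add: integral_inverse_1_plus_square_shift)
    finally show ?thesis .
  qed
  then show ?thesis by blast
qed

definition taylor_coeff :: "nat \<Rightarrow> nat \<Rightarrow> real \<Rightarrow> real" where
  "taylor_coeff k m x = real (2 * k) * real ((2 * k - 1) choose m) * x ^ (2 * k - 1 - m)"

lemma phase_derivative_taylor: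
  "real (2 * k) * y ^ (2 * k - 1) = (\<Sum>m\<le>2 * k - 1. taylor_coeff k m x * (y - x) ^ m)"
proof -
  have "y ^ (2 * k - 1) = ((y - x) + x) ^ (2 * k - 1)" by simp
  also have "\<dots> = (\<Sum>m\<le>2 * k - 1. real ((2 * k - 1) choose m) * (y - x) ^ m * x ^ (2 * k - 1 - m))"
    by (rule binomial_ring)
  finally show ?thesis
    by (simp add: taylor_coeff_def sum_distrib_left mult_ac)
qed

text \<open>Integration by parts: the derivative of the phase, expanded around \<open>x\<close>, moves onto the window.\<close>

lemma osc_integrand_has_vector_derivative:
  assumes "schwartz f"
  shows "(osc_integrand f k j n x \<xi> has_vector_derivative
      of_nat j * osc_integrand f k (j - 1) n x \<xi> y + osc_integrand f k j (Suc n) x \<xi> y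
      + \<i> * (\<Sum>m\<le>2 * k - 1. of_real (taylor_coeff k m x) * osc_integrand f k (j + m) n x \<xi> y)
      - \<i> * of_real \<xi> * osc_integrand f k j n x \<xi> y) (at y)"
proof -
  have taylor: "(\<Sum>m\<le>2 * k - 1. of_real (taylor_coeff k m x) * osc_integrand f k (j + m) n x \<xi> y)
      = chirp k \<xi> y * (of_real (real (2 * k) * y ^ (2 * k - 1)) * window_moment f j n (y - x))"
  proof -
    have "(\<Sum>m\<le>2 * k - 1. of_real (taylor_coeff k m x) * osc_integrand f k (j + m) n x \<xi> y)
        = chirp k \<xi> y * (\<Sum>m\<le>2 * k - 1. of_real (taylor_coeff k m x) * window_moment f (j + m) n (y - x))"
      by (simp add: osc_integrand_def sum_distrib_left mult_ac)
    also have "(\<Sum>m\<le>2 * k - 1. of_real (taylor_coeff k m x) * window_moment f (j + m) n (y - x))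
        = of_real (real (2 * k) * y ^ (2 * k - 1)) * window_moment f j n (y - x)"
      unfolding phase_derivative_taylor[of k y x] of_real_sum sum_distrib_right
      by (intro sum.cong refl) (simp add: window_moment_def power_add mult_ac)
    finally show ?thesis .
  qed
  show ?thesis
    unfolding taylor unfolding osc_integrand_def[abs_def]
    by (rule has_vector_derivative_mult[OF chirp_has_vector_derivative
          window_moment_shift_has_vector_derivative[OF assms], THEN has_vector_derivative_eq_rhs])
      (simp add: algebra_simps)
qed

lemma osc_integral_recurrence:
  assumes "schwartz f"
  shows "of_nat j * osc_integral f k (j - 1) n x \<xi> + osc_integral f k j (Suc n) x \<xi>
      + \<i> * (\<Sum>m\<le>2 * k - 1. of_real (taylor_coeff k m x) * osc_integral f k (j + m) n x \<xi>)
      - \<i> * of_real \<xi> * osc_integral f k j n x \<xi> = 0"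
proof -
  let ?I = "\<lambda>j n. osc_integrand f k j n x \<xi>"
  define D where "D y = of_nat j * ?I (j - 1) n y + ?I j (Suc n) y
      + \<i> * (\<Sum>m\<le>2 * k - 1. of_real (taylor_coeff k m x) * ?I (j + m) n y)
      - \<i> * of_real \<xi> * ?I j n y" for y
  have int: "integrable lborel (?I j' n')" for j' n'
    using integrable_osc_integrand[OF assms] .
  have "integral\<^sup>L lborel D = 0"
  proof (rule integral_eq_0_of_has_vector_derivative)
    show "(?I j n has_vector_derivative D y) (at y)" for y
      unfolding D_def by (rule osc_integrand_has_vector_derivative[OF assms])
    show "continuous_on UNIV D"
      unfolding D_def by (intro continuous_intros osc_integrand_continuous_on assms)
    show "integrable lborel D"
      unfolding D_def by (intro Bochner_Integration.integrable_diff Bochner_Integration.integrable_add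
          Bochner_Integration.integrable_mult_right Bochner_Integration.integrable_sum int)
    obtain C where C: "\<And>y. norm (?I j n y) \<le> C * inverse (1 + (y - x)\<^sup>2)"
      using osc_integrand_bound[OF assms] by blast
    show "(?I j n \<longlongrightarrow> 0) at_top" "(?I j n \<longlongrightarrow> 0) at_bot"
      by (rule Lim_null_comparison[OF always_eventually[OF allI[OF C]]]; real_asymp)+
  qed
  moreover have "integral\<^sup>L lborel D = of_nat j * osc_integral f k (j - 1) n x \<xi> + osc_integral f k j (Suc n) x \<xi>
      + \<i> * (\<Sum>m\<le>2 * k - 1. of_real (taylor_coeff k m x) * osc_integral f k (j + m) n x \<xi>)
      - \<i> * of_real \<xi> * osc_integral f k j n x \<xi>"
    unfolding D_def osc_integral_def
    by (subst Bochner_Integration.integral_diff Bochner_Integration.integral_add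
          Bochner_Integration.integral_mult_right Bochner_Integration.integral_sum
        | intro Bochner_Integration.integrable_diff Bochner_Integration.integrable_add
          Bochner_Integration.integrable_mult_right Bochner_Integration.integrable_sum int)+
      (simp add: Bochner_Integration.integral_sum int)
  ultimately show ?thesis by simp
qed

lemma norm_osc_integral_le:
  assumes "schwartz f" "k \<ge> 1"
  shows "\<bar>real (2 * k) * x ^ (2 * k - 1) - \<xi>\<bar> * norm (osc_integral f k j n x \<xi>)
    \<le> real j * norm (osc_integral f k (j - 1) n x \<xi>) + norm (osc_integral f k j (Suc n) x \<xi>)
      + (\<Sum>i\<le>2 * k - 2. \<bar>taylor_coeff k (Suc i) x\<bar> * norm (osc_integral f k (j + Suc i) n x \<xi>))"
proof -
  let ?I = "\<lambda>j n. osc_integral f k j n x \<xi>"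
  define S where "S = (\<Sum>i\<le>2 * k - 2. of_real (taylor_coeff k (Suc i) x) * ?I (j + Suc i) n)"
  have "2 * k - 1 = Suc (2 * k - 2)"
    using assms(2) by simp
  then have "(\<Sum>m\<le>2 * k - 1. of_real (taylor_coeff k m x) * ?I (j + m) n)
      = of_real (real (2 * k) * x ^ (2 * k - 1)) * ?I j n + S"
    unfolding S_def by (simp only:) (subst sum.atMost_Suc_shift, simp add: taylor_coeff_def)
  with osc_integral_recurrence[OF assms(1), of j k n x \<xi>]
  have "\<i> * of_real (real (2 * k) * x ^ (2 * k - 1) - \<xi>) * ?I j n = - (of_nat j * ?I (j - 1) n + ?I j (Suc n) + \<i> * S)"
    by (simp add: algebra_simps eq_neg_iff_add_eq_0)
  then have "\<bar>real (2 * k) * x ^ (2 * k - 1) - \<xi>\<bar> * norm (?I j n) = norm (of_nat j * ?I (j - 1) n + ?I j (Suc n) + \<i> * S)"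
    by (metis norm_minus_cancel norm_mult norm_ii norm_of_real mult_1)
  also have "\<dots> \<le> real j * norm (?I (j - 1) n) + norm (?I j (Suc n)) + norm S"
    by (rule norm_triangle_le norm_triangle_mono order_refl | simp add: norm_mult)+
  also have "norm S \<le> (\<Sum>i\<le>2 * k - 2. \<bar>taylor_coeff k (Suc i) x\<bar> * norm (?I (j + Suc i) n))"
    unfolding S_def by (rule order_trans[OF norm_sum]) (simp add: norm_mult)
  finally show ?thesis by simp
qed

definition nonstationary :: "nat \<Rightarrow> real \<Rightarrow> real \<Rightarrow> bool" where
  "nonstationary k x \<xi> \<longleftrightarrow> real k * \<bar>x\<bar> ^ (2 * k - 1) \<le> \<bar>real (2 * k) * x ^ (2 * k - 1) - \<xi>\<bar>"

lemma nonstationaryI_small_frequency: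
  assumes "\<bar>\<xi>\<bar> \<le> real k * \<bar>x\<bar> ^ (2 * k - 1)"
  shows "nonstationary k x \<xi>"
  using assms abs_triangle_ineq2[of "real (2 * k) * x ^ (2 * k - 1)" \<xi>]
  unfolding nonstationary_def by (simp add: abs_mult power_abs)

lemma nonstationaryI_opposite_sign:
  assumes "x ^ (2 * k - 1) * \<xi> \<le> 0"
  shows "nonstationary k x \<xi>"
proof -
  define t where "t = real k * x ^ (2 * k - 1)"
  have "t * \<xi> \<le> 0"
    using assms mult_left_mono[OF assms, of "real k"] by (simp add: t_def mult_ac)
  then have "\<bar>t\<bar> \<le> \<bar>2 * t - \<xi>\<bar>"
    by (auto simp: abs_if mult_le_0_iff)
  then show ?thesis
    by (simp add: nonstationary_def t_def abs_mult power_abs mult_ac)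
qed

definition taylor_coeff_bound :: "nat \<Rightarrow> real" where
  "taylor_coeff_bound k = (\<Sum>i\<le>2 * k - 2. real (2 * k) * real ((2 * k - 1) choose Suc i))"

lemma abs_taylor_coeff_le:
  assumes "1 \<le> \<bar>x\<bar>"
  shows "\<bar>taylor_coeff k (Suc i) x\<bar> \<le> real (2 * k) * real ((2 * k - 1) choose Suc i) * \<bar>x\<bar> ^ (2 * k - 2)"
proof -
  have "\<bar>x\<bar> ^ (2 * k - 1 - Suc i) \<le> \<bar>x\<bar> ^ (2 * k - 2)"
    using assms by (intro power_increasing) auto
  then show ?thesis
    unfolding taylor_coeff_def by (simp add: abs_mult power_abs mult_left_mono)
qed

text \<open>One integration by parts gains a factor \<open>1/\<bar>x\<bar>\<close>, at the price of more moments and one more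
  derivative of the window.\<close>

lemma osc_integral_decay_step:
  assumes f: "schwartz f" and k: "k \<ge> 1" and x: "1 \<le> \<bar>x\<bar>" and ns: "nonstationary k x \<xi>"
    and bound: "\<And>j' n'. j' \<le> j + 2 * k - 1 \<Longrightarrow> n' \<le> Suc n \<Longrightarrow> norm (osc_integral f k j' n' x \<xi>) \<le> \<epsilon>"
  shows "\<bar>x\<bar> * norm (osc_integral f k j n x \<xi>) \<le> (real j + 1 + taylor_coeff_bound k) * \<epsilon> / real k"
proof -
  let ?I = "\<lambda>j n. osc_integral f k j n x \<xi>"
  let ?P = "\<bar>x\<bar> ^ (2 * k - 2)"
  have "norm (?I j n) \<le> \<epsilon>"
    using bound k by simp
  then have \<epsilon>: "0 \<le> \<epsilon>"
    by (rule order_trans[OF norm_ge_zero])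
  have P: "1 \<le> ?P"
    using x by (simp add: one_le_power)
  have "\<bar>taylor_coeff k (Suc i) x\<bar> * norm (?I (j + Suc i) n)
      \<le> real (2 * k) * real ((2 * k - 1) choose Suc i) * ?P * \<epsilon>" if "i \<le> 2 * k - 2" for i
    by (rule mult_mono[OF abs_taylor_coeff_le[OF x] bound]) (use that k in auto)
  then have sum: "(\<Sum>i\<le>2 * k - 2. \<bar>taylor_coeff k (Suc i) x\<bar> * norm (?I (j + Suc i) n))
      \<le> taylor_coeff_bound k * ?P * \<epsilon>"
    unfolding taylor_coeff_bound_def sum_distrib_right by (intro sum_mono) simp
  have jterm: "real j * norm (?I (j - 1) n) \<le> real j * \<epsilon>"
    using bound[of "j - 1" n] by (intro mult_left_mono) auto
  have "2 * k - 1 = Suc (2 * k - 2)"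
    using k by simp
  then have "real k * (\<bar>x\<bar> * norm (?I j n)) * ?P = real k * \<bar>x\<bar> ^ (2 * k - 1) * norm (?I j n)"
    by (simp only: power_Suc mult_ac)
  also have "\<dots> \<le> \<bar>real (2 * k) * x ^ (2 * k - 1) - \<xi>\<bar> * norm (?I j n)"
    using ns unfolding nonstationary_def by (rule mult_right_mono) simp
  also have "\<dots> \<le> real j * \<epsilon> + \<epsilon> + taylor_coeff_bound k * ?P * \<epsilon>"
    using norm_osc_integral_le[OF f k, of x \<xi> j n] bound[of j "Suc n"] jterm sum k by linarith
  also have "\<dots> \<le> (real j + 1 + taylor_coeff_bound k) * \<epsilon> * ?P"
    using mult_right_mono[OF P, of "(real j + 1) * \<epsilon>"] \<epsilon> by (simp add: algebra_simps)
  finally have "real k * (\<bar>x\<bar> * norm (?I j n)) \<le> (real j + 1 + taylor_coeff_bound k) * \<epsilon>"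
    by (rule mult_right_le_imp_le) (use P in linarith)
  then show ?thesis
    using k by (simp add: field_simps)
qed

lemma osc_integral_bounded_uniform:
  assumes f: "schwartz f"
  shows "\<exists>C. \<forall>j\<le>J. \<forall>n\<le>J. \<forall>x \<xi>. norm (osc_integral f k j n x \<xi>) \<le> C"
proof -
  have "\<forall>j n. \<exists>C. \<forall>x \<xi>. norm (osc_integral f k j n x \<xi>) \<le> C"
    using osc_integral_bounded[OF f] by blast
  then obtain C where C: "\<And>j n x \<xi>. norm (osc_integral f k j n x \<xi>) \<le> C j n"
    by metis
  have "C j n \<le> (\<Sum>j'\<le>J. \<Sum>n'\<le>J. \<bar>C j' n'\<bar>)" if "j \<le> J" "n \<le> J" for j n
  proof -
    have "C j n \<le> (\<Sum>n'\<le>J. \<bar>C j n'\<bar>)"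
      using that by (intro order_trans[OF abs_ge_self, of "C j n"] member_le_sum) auto
    also have "\<dots> \<le> (\<Sum>j'\<le>J. \<Sum>n'\<le>J. \<bar>C j' n'\<bar>)"
      using that by (intro member_le_sum[where f="\<lambda>j'. \<Sum>n'\<le>J. \<bar>C j' n'\<bar>"] sum_nonneg) auto
    finally show ?thesis .
  qed
  then show ?thesis
    using C by (meson order_trans)
qed

lemma osc_integral_rapid_decay:
  assumes f: "schwartz f" and k: "k \<ge> 1"
  shows "\<exists>C R. R \<ge> 1 \<and> (\<forall>j\<le>J. \<forall>n\<le>J. \<forall>x \<xi>. R \<le> \<bar>x\<bar> \<longrightarrow> nonstationary k x \<xi> \<longrightarrow>
           norm (osc_integral f k j n x \<xi>) \<le> C / \<bar>x\<bar> ^ N)"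
proof (induction N arbitrary: J)
  case 0
  then show ?case
    using osc_integral_bounded_uniform[OF f, of J k] by (metis div_by_1 order_refl power_0)
next
  case (Suc N)
  obtain C R where R: "R \<ge> 1" and IH: "\<And>j n x \<xi>. j \<le> J + 2 * k \<Longrightarrow> n \<le> J + 2 * k \<Longrightarrow> R \<le> \<bar>x\<bar> \<Longrightarrow>
      nonstationary k x \<xi> \<Longrightarrow> norm (osc_integral f k j n x \<xi>) \<le> C / \<bar>x\<bar> ^ N"
    using Suc.IH[of "J + 2 * k"] by blast
  define C' where "C' = (real J + 1 + taylor_coeff_bound k) * \<bar>C\<bar> / real k"
  have "norm (osc_integral f k j n x \<xi>) \<le> C' / \<bar>x\<bar> ^ Suc N"
    if j: "j \<le> J" and n: "n \<le> J" and x: "R \<le> \<bar>x\<bar>" and ns: "nonstationary k x \<xi>" for j n x \<xi>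
  proof -
    have x1: "1 \<le> \<bar>x\<bar>"
      using R x by simp
    have "norm (osc_integral f k j' n' x \<xi>) \<le> \<bar>C\<bar> / \<bar>x\<bar> ^ N"
      if "j' \<le> j + 2 * k - 1" "n' \<le> Suc n" for j' n'
    proof -
      have "norm (osc_integral f k j' n' x \<xi>) \<le> C / \<bar>x\<bar> ^ N"
        using that j n k by (intro IH x ns) auto
      also have "\<dots> \<le> \<bar>C\<bar> / \<bar>x\<bar> ^ N"
        by (intro divide_right_mono) auto
      finally show ?thesis .
    qed
    then have "\<bar>x\<bar> * norm (osc_integral f k j n x \<xi>)
        \<le> (real j + 1 + taylor_coeff_bound k) * (\<bar>C\<bar> / \<bar>x\<bar> ^ N) / real k"
      by (rule osc_integral_decay_step[OF f k x1 ns])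
    also have "\<dots> \<le> (real J + 1 + taylor_coeff_bound k) * (\<bar>C\<bar> / \<bar>x\<bar> ^ N) / real k"
      using j by (intro divide_right_mono mult_right_mono) auto
    also have "\<dots> = C' / \<bar>x\<bar> ^ N"
      by (simp add: C'_def)
    finally show ?thesis
      using x1 by (simp add: pos_le_divide_eq mult_ac)
  qed
  with R show ?case by blast
qed

section \<open>Points off the frequency axis are regular\<close>

definition fourier_transform :: "(real \<Rightarrow> complex) \<Rightarrow> real \<Rightarrow> complex" where
  "fourier_transform g \<xi> = (\<integral>y. g y * exp (- \<i> * complex_of_real (y * \<xi>)) \<partial>lborel)"

lemma stft_eq_fourier_transform: "stft \<phi> u (x, \<xi>) = fourier_transform (\<lambda>y. u y * cnj (\<phi> (y - x))) \<xi>"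
  by (simp add: stft_def fourier_transform_def)

lemma stft_chirp:
  assumes "\<And>y. u y = exp (\<i> * complex_of_real (y ^ (2 * k)))"
  shows "stft f u (x, \<xi>) = fourier_transform (osc_integrand f k 0 0 x 0) \<xi>"
    and "stft f u (x, \<xi>) = osc_integral f k 0 0 x \<xi>"
proof -
  have "u y * cnj (f (y - x)) = osc_integrand f k 0 0 x 0 y" for y
    by (simp add: assms osc_integrand_def chirp_def window_moment_def)
  then show "stft f u (x, \<xi>) = fourier_transform (osc_integrand f k 0 0 x 0) \<xi>"
    by (simp add: stft_eq_fourier_transform)
  have "osc_integrand f k 0 0 x 0 y * exp (- \<i> * complex_of_real (y * \<xi>)) = osc_integrand f k 0 0 x \<xi> y" for y
    by (simp add: osc_integrand_def chirp_def exp_diff exp_minus right_diff_distrib divide_inverse mult_ac)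
  then show "stft f u (x, \<xi>) = osc_integral f k 0 0 x \<xi>"
    by (simp add: \<open>stft f u (x, \<xi>) = _\<close> fourier_transform_def osc_integral_def)
qed

definition jbracket :: "real \<times> real \<Rightarrow> real" where
  "jbracket z = sqrt (1 + (norm z)\<^sup>2)"

lemma one_le_jbracket: "1 \<le> jbracket z"
  by (simp add: jbracket_def)

lemma jbracket_le: "jbracket (x, \<xi>) \<le> 1 + \<bar>x\<bar> + \<bar>\<xi>\<bar>"
proof -
  have "1 + (norm (x, \<xi>))\<^sup>2 \<le> (1 + \<bar>x\<bar> + \<bar>\<xi>\<bar>)\<^sup>2"
    by (simp add: norm_Pair power2_eq_square algebra_simps)
  from real_sqrt_le_mono[OF this] show ?thesis
    unfolding jbracket_def by simp
qed

lemma abs_fst_le_jbracket: "\<bar>x\<bar> \<le> jbracket (x, \<xi>)"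
proof -
  have "x\<^sup>2 \<le> 1 + (norm (x, \<xi>))\<^sup>2"
    by (simp add: norm_Pair)
  then show ?thesis
    unfolding jbracket_def by (metis real_sqrt_abs real_sqrt_le_mono)
qed

lemma jbracket_powr_le: "0 \<le> N \<Longrightarrow> jbracket z powr N \<le> jbracket z ^ nat \<lceil>N\<rceil>"
  using one_le_jbracket[of z] by (simp add: powr_realpow[symmetric] powr_mono)

lemma stft_chirp_rapid_decay_on_sector:
  assumes k: "k \<ge> 2" and u: "\<And>y. u y = exp (\<i> * complex_of_real (y ^ (2 * k)))"
    and f: "schwartz f" and L: "L \<ge> 1"
  shows "\<exists>C. \<forall>x \<xi>. \<bar>\<xi>\<bar> \<le> L * \<bar>x\<bar> \<longrightarrow> jbracket (x, \<xi>) ^ M * norm (stft f u (x, \<xi>)) \<le> C"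
proof -
  obtain C1 R1 where R1: "R1 \<ge> 1" and C1: "\<And>x \<xi>. R1 \<le> \<bar>x\<bar> \<Longrightarrow> nonstationary k x \<xi> \<Longrightarrow>
      norm (osc_integral f k 0 0 x \<xi>) \<le> C1 / \<bar>x\<bar> ^ M"
    using osc_integral_rapid_decay[OF f, of k 0 M] k by auto
  obtain B where B: "\<And>x \<xi>. norm (osc_integral f k 0 0 x \<xi>) \<le> B"
    using osc_integral_bounded[OF f] by blast
  define R where "R = max R1 L"
  have "jbracket (x, \<xi>) ^ M * norm (stft f u (x, \<xi>)) \<le> max ((2 + L) ^ M * C1) ((1 + R + L * R) ^ M * B)"
    if \<xi>: "\<bar>\<xi>\<bar> \<le> L * \<bar>x\<bar>" for x \<xi>
  proof (cases "R \<le> \<bar>x\<bar>")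
    case True
    then have x1: "1 \<le> \<bar>x\<bar>" and xL: "L \<le> \<bar>x\<bar>" and xR1: "R1 \<le> \<bar>x\<bar>"
      using R1 L by (auto simp: R_def)
    have "\<bar>\<xi>\<bar> \<le> \<bar>x\<bar> ^ 2"
      using \<xi> mult_right_mono[OF xL, of "\<bar>x\<bar>"] by (simp add: power2_eq_square)
    also have "\<dots> \<le> \<bar>x\<bar> ^ (2 * k - 1)"
      using x1 k by (intro power_increasing) auto
    also have "\<dots> \<le> real k * \<bar>x\<bar> ^ (2 * k - 1)"
      using k x1 by (simp add: mult_le_cancel_right1)
    finally have "norm (stft f u (x, \<xi>)) \<le> C1 / \<bar>x\<bar> ^ M"
      by (simp add: stft_chirp(2)[OF u] C1[OF xR1] nonstationaryI_small_frequency)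
    moreover have "jbracket (x, \<xi>) \<le> (2 + L) * \<bar>x\<bar>"
      using jbracket_le[of x \<xi>] \<xi> x1 by (simp add: algebra_simps)
    ultimately have "jbracket (x, \<xi>) ^ M * norm (stft f u (x, \<xi>)) \<le> ((2 + L) * \<bar>x\<bar>) ^ M * (C1 / \<bar>x\<bar> ^ M)"
      using L by (intro mult_mono power_mono) (auto intro: order_trans[OF zero_le_one one_le_jbracket])
    also have "\<dots> = (2 + L) ^ M * C1"
      using x1 by (auto simp: power_mult_distrib)
    finally show ?thesis by simp
  next
    case False
    then have "\<bar>\<xi>\<bar> \<le> L * R"
      using \<xi> L by (smt (verit) mult_left_mono)
    then have "jbracket (x, \<xi>) \<le> 1 + R + L * R"
      using jbracket_le[of x \<xi>] False by simp
    moreover have "0 \<le> B"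
      using B[of 0 0] by (rule order_trans[OF norm_ge_zero])
    moreover have "0 \<le> 1 + R + L * R"
      using L R1 mult_nonneg_nonneg[of L R] by (simp add: R_def)
    ultimately have "jbracket (x, \<xi>) ^ M * norm (stft f u (x, \<xi>)) \<le> (1 + R + L * R) ^ M * B"
      using B[of x \<xi>] by (intro mult_mono power_mono)
        (auto simp: stft_chirp(2)[OF u] intro: order_trans[OF zero_le_one one_le_jbracket])
    then show ?thesis by simp
  qed
  then show ?thesis by blast
qed

lemma fst_nonzero_not_in_gabor_WF:
  assumes k: "k \<ge> 2" and u: "\<And>y. u y = exp (\<i> * complex_of_real (y ^ (2 * k)))"
    and f: "schwartz f" and x0: "x0 \<noteq> 0"
  shows "(x0, \<xi>0) \<notin> gabor_WF f u"
proof -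
  define L where "L = \<bar>\<xi>0\<bar> / \<bar>x0\<bar> + 1"
  define \<Gamma> where "\<Gamma> = {z :: real \<times> real. \<bar>snd z\<bar> < L * \<bar>fst z\<bar>}"
  have "L \<ge> 1"
    using x0 by (simp add: L_def)
  have "open \<Gamma>"
    unfolding \<Gamma>_def by (intro open_Collect_less continuous_intros)
  moreover have "conic \<Gamma>"
    by (auto simp: conic_def \<Gamma>_def abs_mult)
  moreover have "(x0, \<xi>0) \<in> \<Gamma>"
    using x0 by (simp add: \<Gamma>_def L_def distrib_right)
  moreover have "\<exists>C. \<forall>z\<in>\<Gamma>. jbracket z powr N * norm (stft f u z) \<le> C" if N: "N \<ge> 0" for N
  proof -
    obtain C where C: "\<And>x \<xi>. \<bar>\<xi>\<bar> \<le> L * \<bar>x\<bar> \<Longrightarrow> jbracket (x, \<xi>) ^ nat \<lceil>N\<rceil> * norm (stft f u (x, \<xi>)) \<le> C"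
      using stft_chirp_rapid_decay_on_sector[OF k u f \<open>L \<ge> 1\<close>] by blast
    have "jbracket z powr N * norm (stft f u z) \<le> C" if "z \<in> \<Gamma>" for z
      using that C[of "snd z" "fst z"] jbracket_powr_le[OF N, of z]
      by (cases z) (auto simp: \<Gamma>_def intro: order_trans[OF mult_right_mono])
    then show ?thesis by blast
  qed
  ultimately show ?thesis
    unfolding gabor_WF_def jbracket_def[symmetric] by blast
qed

section \<open>Gaussian smoothing\<close>

lemma std_normal_density_fourier:
  "(\<integral>s. std_normal_density s *\<^sub>R iexp (t * s) \<partial>lborel) = complex_of_real (exp (- t\<^sup>2 / 2))"
proof -
  have "char std_normal_distribution t = (\<integral>s. std_normal_density s *\<^sub>R iexp (t * s) \<partial>lborel)"
    unfolding char_def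
    by (subst integral_density) (auto intro!: borel_measurable_continuous_onI continuous_intros)
  then show ?thesis
    by (simp add: char_std_normal_distribution)
qed

lemma integral_reflect_rescale:
  fixes h :: "real \<Rightarrow> real"
  assumes "integrable lborel h" "\<sigma> > 0"
  shows "integrable lborel (\<lambda>y. h ((y0 - y) / \<sigma>))"
    and "(\<integral>y. h ((y0 - y) / \<sigma>) \<partial>lborel) = \<sigma> * (\<integral>s. h s \<partial>lborel)"
proof -
  have h: "(\<lambda>s. h ((y0 - (y0 + (- \<sigma>) * s)) / \<sigma>)) = h"
    using assms(2) by auto
  show "integrable lborel (\<lambda>y. h ((y0 - y) / \<sigma>))"
    using lborel_integrable_real_affine_iff[of "- \<sigma>" "\<lambda>y. h ((y0 - y) / \<sigma>)" y0] assms by (simp add: h)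
  show "(\<integral>y. h ((y0 - y) / \<sigma>) \<partial>lborel) = \<sigma> * (\<integral>s. h s \<partial>lborel)"
    using lborel_integral_real_affine[of "- \<sigma>" "\<lambda>y. h ((y0 - y) / \<sigma>)" y0] assms by (simp add: h)
qed

definition gauss_kernel :: "real \<Rightarrow> real \<Rightarrow> real \<Rightarrow> real" where
  "gauss_kernel \<sigma> y0 y = std_normal_density ((y0 - y) / \<sigma>)"

lemma gauss_kernel_nonneg: "0 \<le> gauss_kernel \<sigma> y0 y"
  by (simp add: gauss_kernel_def)

lemma gauss_kernel_measurable [measurable]: "gauss_kernel \<sigma> y0 \<in> borel_measurable borel"
  unfolding gauss_kernel_def[abs_def] by measurable

lemma
  assumes "\<sigma> > 0"
  shows integrable_gauss_kernel: "integrable lborel (gauss_kernel \<sigma> y0)"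
    and integral_gauss_kernel: "(\<integral>y. gauss_kernel \<sigma> y0 y \<partial>lborel) = \<sigma>"
    and integrable_gauss_kernel_abs: "integrable lborel (\<lambda>y. gauss_kernel \<sigma> y0 y * \<bar>y - y0\<bar>)"
    and integral_gauss_kernel_abs: "(\<integral>y. gauss_kernel \<sigma> y0 y * \<bar>y - y0\<bar> \<partial>lborel) = \<sigma>\<^sup>2 * sqrt (2 / pi)"
proof -
  have int0: "integrable lborel std_normal_density"
    using integrable_std_normal_moment[of 0] by simp
  have int1: "integrable lborel (\<lambda>s. \<sigma> * (std_normal_density s * \<bar>s\<bar>))"
    using integrable_std_normal_moment_abs[of 1] by simp
  have abs: "gauss_kernel \<sigma> y0 y * \<bar>y - y0\<bar> = \<sigma> * (std_normal_density ((y0 - y) / \<sigma>) * \<bar>(y0 - y) / \<sigma>\<bar>)" for y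
    using assms by (simp add: gauss_kernel_def abs_minus_commute)
  show "integrable lborel (gauss_kernel \<sigma> y0)"
    using integral_reflect_rescale(1)[OF int0 assms] by (simp add: gauss_kernel_def[abs_def])
  show "(\<integral>y. gauss_kernel \<sigma> y0 y \<partial>lborel) = \<sigma>"
    using integral_reflect_rescale(2)[OF int0 assms] integral_std_normal_moment_even[of 0]
    by (simp add: gauss_kernel_def)
  show "integrable lborel (\<lambda>y. gauss_kernel \<sigma> y0 y * \<bar>y - y0\<bar>)"
    using integral_reflect_rescale(1)[OF int1 assms] by (simp add: abs)
  show "(\<integral>y. gauss_kernel \<sigma> y0 y * \<bar>y - y0\<bar> \<partial>lborel) = \<sigma>\<^sup>2 * sqrt (2 / pi)"
    using integral_reflect_rescale(2)[OF int1 assms] integral_std_normal_moment_abs_odd[of 0] assms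
    by (simp add: abs power2_eq_square)
qed

text \<open>Fubini, with the Gaussian as its own Fourier transform.\<close>

lemma gauss_smoothing_fourier:
  fixes g :: "real \<Rightarrow> complex"
  assumes g: "g \<in> borel_measurable borel" "integrable lborel g"
  shows "sqrt (2 * pi) *\<^sub>R (\<integral>y. gauss_kernel \<sigma> y0 y *\<^sub>R g y \<partial>lborel)
    = (\<integral>s. std_normal_density s *\<^sub>R (iexp (y0 * s / \<sigma>) * fourier_transform g (s / \<sigma>)) \<partial>lborel)"
proof -
  note [measurable] = g(1)
  define H where "H s y = std_normal_density s *\<^sub>R (g y * iexp ((y0 - y) * s / \<sigma>))" for s y
  have norm_H: "norm (H s y) = std_normal_density s * norm (g y)" for s y
    by (simp add: H_def norm_mult)
  have "integrable (lborel \<Otimes>\<^sub>M lborel) (\<lambda>(s, y). H s y)"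
  proof (rule lborel_pair.Fubini_integrable)
    show "(\<lambda>(s, y). H s y) \<in> borel_measurable (lborel \<Otimes>\<^sub>M lborel)"
      unfolding H_def by measurable
    show "integrable lborel (\<lambda>s. \<integral>y. norm ((\<lambda>(s, y). H s y) (s, y)) \<partial>lborel)"
      using integrable_std_normal_moment[of 0] by (simp add: norm_H)
    have "integrable lborel (H s)" for s
    proof (rule Bochner_Integration.integrable_bound)
      show "integrable lborel (\<lambda>y. std_normal_density s * norm (g y))"
        using g(2) by simp
      show "H s \<in> borel_measurable lborel"
        unfolding H_def by measurable
    qed (simp add: norm_H)
    then show "AE s in lborel. integrable lborel (\<lambda>y. (\<lambda>(s, y). H s y) (s, y))"
      by simp
  qed
  then have "(\<integral>y. (\<integral>s. H s y \<partial>lborel) \<partial>lborel) = (\<integral>s. (\<integral>y. H s y \<partial>lborel) \<partial>lborel)"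
    by (intro lborel_pair.Fubini_integral) simp
  moreover have "(\<integral>s. H s y \<partial>lborel) = (sqrt (2 * pi) * gauss_kernel \<sigma> y0 y) *\<^sub>R g y" for y
  proof -
    have "(\<integral>s. H s y \<partial>lborel) = g y * (\<integral>s. std_normal_density s *\<^sub>R iexp ((y0 - y) / \<sigma> * s) \<partial>lborel)"
      unfolding H_def by (simp add: mult_ac flip: integral_mult_right_zero)
    also have "\<dots> = g y * complex_of_real (exp (- ((y0 - y) / \<sigma>)\<^sup>2 / 2))"
      by (simp only: std_normal_density_fourier)
    also have "exp (- ((y0 - y) / \<sigma>)\<^sup>2 / 2) = sqrt (2 * pi) * gauss_kernel \<sigma> y0 y"
      unfolding gauss_kernel_def std_normal_density_def by simp
    finally show ?thesis
      by (simp add: scaleR_conv_of_real mult_ac)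
  qed
  moreover have "(\<integral>y. H s y \<partial>lborel) = std_normal_density s *\<^sub>R (iexp (y0 * s / \<sigma>) * fourier_transform g (s / \<sigma>))" for s
  proof -
    have "\<i> * complex_of_real ((y0 - y) * s / \<sigma>) = \<i> * complex_of_real (y0 * s / \<sigma>) + - \<i> * complex_of_real (y * (s / \<sigma>))" for y
      by (simp add: diff_divide_distrib left_diff_distrib algebra_simps)
    then have "H s y = std_normal_density s *\<^sub>R (iexp (y0 * s / \<sigma>) * (g y * exp (- \<i> * complex_of_real (y * (s / \<sigma>)))))" for y
      unfolding H_def by (simp only: exp_add) (simp add: mult_ac)
    then show ?thesis
      by (simp add: fourier_transform_def)
  qed
  ultimately show ?thesis
    by (simp flip: scaleR_scaleR)
qed

lemma norm_gauss_smoothing_le: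
  fixes g :: "real \<Rightarrow> complex"
  assumes g: "g \<in> borel_measurable borel" "integrable lborel g"
    and F: "\<And>\<xi>. norm (fourier_transform g \<xi>) \<le> B"
  shows "norm (\<integral>y. gauss_kernel \<sigma> y0 y *\<^sub>R g y \<partial>lborel) \<le> B"
proof -
  have "sqrt (2 * pi) * norm (\<integral>y. gauss_kernel \<sigma> y0 y *\<^sub>R g y \<partial>lborel)
      = norm (sqrt (2 * pi) *\<^sub>R (\<integral>y. gauss_kernel \<sigma> y0 y *\<^sub>R g y \<partial>lborel))"
    by simp
  also have "\<dots> = norm (\<integral>s. std_normal_density s *\<^sub>R (iexp (y0 * s / \<sigma>) * fourier_transform g (s / \<sigma>)) \<partial>lborel)"
    by (simp only: gauss_smoothing_fourier[OF g])
  also have "\<dots> \<le> B"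
  proof (cases "integrable lborel (\<lambda>s. std_normal_density s *\<^sub>R (iexp (y0 * s / \<sigma>) * fourier_transform g (s / \<sigma>)))")
    case True
    have "norm (\<integral>s. std_normal_density s *\<^sub>R (iexp (y0 * s / \<sigma>) * fourier_transform g (s / \<sigma>)) \<partial>lborel)
        \<le> (\<integral>s. std_normal_density s * B \<partial>lborel)"
      using True integrable_std_normal_moment[of 0] F
      by (intro Bochner_Integration.integral_norm_bound_integral) (auto simp: norm_mult intro!: mult_left_mono)
    then show ?thesis
      using integral_std_normal_moment_even[of 0] by simp
  next
    case False
    then show ?thesis
      using order_trans[OF norm_ge_zero F[of 0]] by (simp add: not_integrable_integral_eq)
  qed
  finally have "sqrt (2 * pi) * norm (\<integral>y. gauss_kernel \<sigma> y0 y *\<^sub>R g y \<partial>lborel) \<le> B" .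
  moreover have "1 \<le> sqrt (2 * pi)"
    using pi_gt3 by simp
  ultimately show ?thesis
    using mult_right_mono[of 1 "sqrt (2 * pi)" "norm (\<integral>y. gauss_kernel \<sigma> y0 y *\<^sub>R g y \<partial>lborel)"] by simp
qed

lemma norm_gauss_smoothing_diff_le:
  fixes g :: "real \<Rightarrow> complex"
  assumes g: "g \<in> borel_measurable borel"
    and lip: "\<And>a b. norm (g a - g b) \<le> \<Lambda> * \<bar>a - b\<bar>" and \<sigma>: "\<sigma> > 0"
  shows "norm ((\<integral>y. gauss_kernel \<sigma> y0 y *\<^sub>R g y \<partial>lborel) - \<sigma> *\<^sub>R g y0) \<le> \<Lambda> * \<sigma>\<^sup>2"
proof -
  note [measurable] = g
  let ?K = "gauss_kernel \<sigma> y0"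
  have \<Lambda>: "0 \<le> \<Lambda>"
    using order_trans[OF norm_ge_zero lip[of 1 0]] by simp
  have diff_bound: "norm (?K y *\<^sub>R (g y - g y0)) \<le> \<Lambda> * (?K y * \<bar>y - y0\<bar>)" for y
    using mult_left_mono[OF lip[of y y0] gauss_kernel_nonneg[of \<sigma> y0 y]] gauss_kernel_nonneg[of \<sigma> y0 y]
    by (simp add: mult_ac)
  have diff_int: "integrable lborel (\<lambda>y. ?K y *\<^sub>R (g y - g y0))"
  proof (rule Bochner_Integration.integrable_bound)
    show "integrable lborel (\<lambda>y. \<Lambda> * (?K y * \<bar>y - y0\<bar>))"
      using integrable_gauss_kernel_abs[OF \<sigma>] by simp
  qed (use diff_bound \<Lambda> gauss_kernel_nonneg in \<open>auto intro: order_trans[OF _ abs_ge_self]\<close>)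
  have const_int: "integrable lborel (\<lambda>y. ?K y *\<^sub>R g y0)"
    using integrable_gauss_kernel[OF \<sigma>] by simp
  have split: "(\<lambda>y. ?K y *\<^sub>R g y) = (\<lambda>y. ?K y *\<^sub>R g y0 + ?K y *\<^sub>R (g y - g y0))"
    by (auto simp: algebra_simps)
  have "(\<integral>y. ?K y *\<^sub>R g y \<partial>lborel) - \<sigma> *\<^sub>R g y0 = (\<integral>y. ?K y *\<^sub>R (g y - g y0) \<partial>lborel)"
    unfolding split using const_int diff_int integrable_gauss_kernel[OF \<sigma>] integral_gauss_kernel[OF \<sigma>]
    by simp
  also have "norm \<dots> \<le> (\<integral>y. \<Lambda> * (?K y * \<bar>y - y0\<bar>) \<partial>lborel)"
    using diff_int integrable_gauss_kernel_abs[OF \<sigma>] diff_bound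
    by (intro Bochner_Integration.integral_norm_bound_integral) auto
  also have "\<dots> = \<Lambda> * (\<sigma>\<^sup>2 * sqrt (2 / pi))"
    using integral_gauss_kernel_abs[OF \<sigma>] by simp
  also have "\<dots> \<le> \<Lambda> * \<sigma>\<^sup>2"
    using \<Lambda> pi_gt3 by (intro mult_left_mono mult_right_le_one_le) auto
  finally show ?thesis .
qed

lemma norm_mult_le_lipschitz_fourier_bound:
  fixes g :: "real \<Rightarrow> complex"
  assumes g: "g \<in> borel_measurable borel" "integrable lborel g"
    and lip: "\<And>a b. norm (g a - g b) \<le> \<Lambda> * \<bar>a - b\<bar>"
    and F: "\<And>\<xi>. norm (fourier_transform g \<xi>) \<le> B" and \<sigma>: "\<sigma> > 0"
  shows "norm (g y0) * \<sigma> \<le> B + \<Lambda> * \<sigma>\<^sup>2"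
proof -
  let ?S = "\<integral>y. gauss_kernel \<sigma> y0 y *\<^sub>R g y \<partial>lborel"
  have "norm (g y0) * \<sigma> = norm (?S - (?S - \<sigma> *\<^sub>R g y0))"
    using \<sigma> by simp
  also have "\<dots> \<le> norm ?S + norm (?S - \<sigma> *\<^sub>R g y0)"
    by (rule norm_triangle_ineq4)
  also have "\<dots> \<le> B + \<Lambda> * \<sigma>\<^sup>2"
    using norm_gauss_smoothing_le[OF g F] norm_gauss_smoothing_diff_le[OF g(1) lip \<sigma>] by (rule add_mono)
  finally show ?thesis .
qed

lemma square_le_of_linear_le_quadratic:
  fixes m B \<Lambda> :: real
  assumes "\<Lambda> > 0" "m > 0" and le: "\<And>\<sigma>. \<sigma> > 0 \<Longrightarrow> m * \<sigma> \<le> B + \<Lambda> * \<sigma>\<^sup>2"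
  shows "m\<^sup>2 \<le> 4 * \<Lambda> * B"
proof -
  have "m * (m / (2 * \<Lambda>)) \<le> B + \<Lambda> * (m / (2 * \<Lambda>))\<^sup>2"
    using assms by (intro le) simp
  then show ?thesis
    using assms by (simp add: field_simps power2_eq_square)
qed

lemma norm_square_le_lipschitz_fourier_bound:
  fixes g :: "real \<Rightarrow> complex"
  assumes g: "g \<in> borel_measurable borel" "integrable lborel g"
    and lip: "\<And>a b. norm (g a - g b) \<le> \<Lambda> * \<bar>a - b\<bar>" and \<Lambda>: "\<Lambda> > 0"
    and F: "\<And>\<xi>. norm (fourier_transform g \<xi>) \<le> B"
  shows "(norm (g y0))\<^sup>2 \<le> 4 * \<Lambda> * B"
proof (cases "g y0 = 0")
  case True
  then show ?thesis
    using \<Lambda> order_trans[OF norm_ge_zero F[of 0]] by simp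
next
  case False
  then show ?thesis
    using norm_mult_le_lipschitz_fourier_bound[OF g lip F]
    by (intro square_le_of_linear_le_quadratic \<Lambda>) auto
qed

lemma lipschitz_of_vector_derivative_bound:
  fixes g :: "real \<Rightarrow> 'a::real_normed_vector"
  assumes "\<And>y. (g has_vector_derivative g' y) (at y)" "\<And>y. norm (g' y) \<le> L"
  shows "norm (g a - g b) \<le> L * \<bar>a - b\<bar>"
proof -
  have "norm (g a - g b) \<le> L * norm (a - b)"
  proof (rule differentiable_bound[where S=UNIV and f'="\<lambda>y h. h *\<^sub>R g' y"])
    show "(g has_derivative (\<lambda>h. h *\<^sub>R g' y)) (at y within UNIV)" for y
      using assms(1)[of y] by (simp add: has_vector_derivative_def)
    show "onorm (\<lambda>h. h *\<^sub>R g' y) \<le> L" for y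
      using assms(2)[of y] by (simp add: onorm_scaleR_left[OF bounded_linear_ident] onorm_id)
  qed auto
  then show ?thesis by simp
qed

section \<open>Points on the frequency axis are singular\<close>

lemma abs_add_power_le:
  fixes x t :: real
  assumes "1 \<le> \<bar>x\<bar>"
  shows "\<bar>x + t\<bar> ^ m \<le> \<bar>x\<bar> ^ m * (1 + \<bar>t\<bar>) ^ m"
proof -
  have "\<bar>x + t\<bar> \<le> \<bar>x\<bar> * (1 + \<bar>t\<bar>)"
    using assms mult_left_mono[OF assms, of "\<bar>t\<bar>"] by (simp add: algebra_simps)
  then show ?thesis
    by (simp add: power_mono flip: power_mult_distrib)
qed

lemma osc_integrand_lipschitz:
  assumes f: "schwartz f"
  shows "\<exists>A>0. \<forall>x a b. 1 \<le> \<bar>x\<bar> \<longrightarrow>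
    norm (osc_integrand f k 0 0 x 0 a - osc_integrand f k 0 0 x 0 b) \<le> A * \<bar>x\<bar> ^ (2 * k - 1) * \<bar>a - b\<bar>"
proof -
  obtain C0 where C0: "\<And>t. (1 + \<bar>t\<bar>) ^ (2 * k - 1) * norm (nth_deriv 0 f t) \<le> C0"
    using schwartz_weighted_bound[OF f] by blast
  obtain C1 where C1: "\<And>t. (1 + \<bar>t\<bar>) ^ 0 * norm (nth_deriv 1 f t) \<le> C1"
    using schwartz_weighted_bound[OF f] by blast
  define A where "A = \<bar>C1\<bar> + real (2 * k) * \<bar>C0\<bar> + 1"
  have "norm (osc_integrand f k 0 0 x 0 a - osc_integrand f k 0 0 x 0 b) \<le> A * \<bar>x\<bar> ^ (2 * k - 1) * \<bar>a - b\<bar>"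
    if x: "1 \<le> \<bar>x\<bar>" for x a b
  proof (rule lipschitz_of_vector_derivative_bound)
    define D where "D y = chirp k 0 y * window_moment f 0 1 (y - x)
      + \<i> * of_real (real (2 * k) * y ^ (2 * k - 1)) * chirp k 0 y * window_moment f 0 0 (y - x)" for y
    show "(osc_integrand f k 0 0 x 0 has_vector_derivative D y) (at y)" for y
      unfolding osc_integrand_def[abs_def]
      by (rule has_vector_derivative_mult[OF chirp_has_vector_derivative
            window_moment_shift_has_vector_derivative[OF f], THEN has_vector_derivative_eq_rhs])
        (simp add: D_def algebra_simps)
    show "norm (D y) \<le> A * \<bar>x\<bar> ^ (2 * k - 1)" for y
    proof -
      define t where "t = y - x"
      have "\<bar>y\<bar> ^ (2 * k - 1) * norm (f t) \<le> \<bar>x\<bar> ^ (2 * k - 1) * ((1 + \<bar>t\<bar>) ^ (2 * k - 1) * norm (f t))"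
        using abs_add_power_le[OF x, of t "2 * k - 1"] by (simp add: t_def mult_right_mono flip: mult.assoc)
      also have "\<dots> \<le> \<bar>x\<bar> ^ (2 * k - 1) * \<bar>C0\<bar>"
        using C0[of t] by (intro mult_left_mono) auto
      finally have y: "\<bar>y\<bar> ^ (2 * k - 1) * norm (f t) \<le> \<bar>x\<bar> ^ (2 * k - 1) * \<bar>C0\<bar>" .
      have "norm (nth_deriv 1 f t) \<le> \<bar>C1\<bar> * 1"
        using C1[of t] by simp
      also have "\<dots> \<le> \<bar>C1\<bar> * \<bar>x\<bar> ^ (2 * k - 1)"
        using x by (intro mult_left_mono) (auto simp: one_le_power)
      finally have "norm (D y) \<le> \<bar>C1\<bar> * \<bar>x\<bar> ^ (2 * k - 1) + real (2 * k) * (\<bar>x\<bar> ^ (2 * k - 1) * \<bar>C0\<bar>)"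
        using y unfolding D_def t_def[symmetric]
        by (intro order_trans[OF norm_triangle_ineq] add_mono)
          (simp_all add: norm_mult window_moment_def power_abs abs_mult norm_power mult_left_mono)
      also have "\<dots> \<le> A * \<bar>x\<bar> ^ (2 * k - 1)"
        using x by (simp add: A_def algebra_simps one_le_power)
      finally show ?thesis .
    qed
  qed
  moreover have "A > 0"
    by (simp add: A_def add_nonneg_pos)
  ultimately show ?thesis by blast
qed

lemma open_conic_contains_narrow_cone:
  assumes "open \<Gamma>" "conic \<Gamma>" "(0, \<eta>) \<in> \<Gamma>"
  obtains \<epsilon> where "\<epsilon> > 0" "\<And>t x. t > 0 \<Longrightarrow> \<bar>x\<bar> \<le> \<epsilon> * t \<Longrightarrow> (x, t * \<eta>) \<in> \<Gamma>"
proof -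
  obtain r where r: "r > 0" "ball (0, \<eta>) r \<subseteq> \<Gamma>"
    using assms(1,3) open_contains_ball by blast
  have "(x, t * \<eta>) \<in> \<Gamma>" if t: "t > 0" and x: "\<bar>x\<bar> \<le> r / 2 * t" for t x
  proof -
    have "\<bar>x / t\<bar> = \<bar>x\<bar> / t"
      using t by simp
    also have "\<dots> \<le> r / 2"
      using x t by (simp add: divide_le_eq)
    also have "\<dots> < r"
      using r by simp
    finally have "\<bar>x / t\<bar> < r" .
    then have "(x / t, \<eta>) \<in> \<Gamma>"
      using r by (auto simp: dist_Pair_Pair dist_real_def)
    then have "t *\<^sub>R (x / t, \<eta>) \<in> \<Gamma>"
      using assms(2) t unfolding conic_def by blast
    moreover have "t *\<^sub>R (x / t, \<eta>) = (x, t * \<eta>)"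
      using t by simp
    ultimately show ?thesis
      by simp
  qed
  with r show ?thesis
    by (intro that[of "r / 2"]) auto
qed

lemma stationary_frequency_in_narrow_cone:
  assumes k: "k \<ge> 2" and \<eta>: "\<eta> \<noteq> 0" and \<epsilon>: "\<epsilon> > 0" and X: "1 \<le> X" "\<bar>\<eta>\<bar> \<le> \<epsilon> * X"
    and stationary: "\<not> nonstationary k (sgn \<eta> * X) \<xi>"
  shows "\<xi> / \<eta> > 0" and "X \<le> \<epsilon> * (\<xi> / \<eta>)"
proof -
  have "odd (2 * k - 1)"
    using k by simp
  then have "(sgn \<eta> * X) ^ (2 * k - 1) = sgn \<eta> * X ^ (2 * k - 1)"
    using \<eta> by (simp add: power_mult_distrib sgn_real_def)
  moreover have "\<bar>sgn \<eta> * X\<bar> = X"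
    using X \<eta> by (simp add: abs_mult)
  moreover have "\<not> (sgn \<eta> * X) ^ (2 * k - 1) * \<xi> \<le> 0"
    and "\<not> \<bar>\<xi>\<bar> \<le> real k * \<bar>sgn \<eta> * X\<bar> ^ (2 * k - 1)"
    using stationary nonstationaryI_opposite_sign nonstationaryI_small_frequency by blast+
  ultimately have "0 < X ^ (2 * k - 1) * (sgn \<eta> * \<xi>)" and large: "real k * X ^ (2 * k - 1) < \<bar>\<xi>\<bar>"
    by (simp_all add: mult_ac)
  then have same_sign: "0 < sgn \<eta> * \<xi>"
    using X by (simp add: zero_less_mult_iff)
  then show "\<xi> / \<eta> > 0"
    using \<eta> by (simp add: sgn_real_def zero_less_divide_iff split: if_splits)
  have "\<bar>\<eta>\<bar> * X \<le> \<epsilon> * X ^ 2"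
    using X \<epsilon> by (simp add: power2_eq_square mult_right_mono)
  also have "\<dots> \<le> \<epsilon> * X ^ (2 * k - 1)"
    using X k \<epsilon> by (intro mult_left_mono power_increasing) auto
  also have "\<dots> \<le> \<epsilon> * \<bar>\<xi>\<bar>"
    using large k \<epsilon> X by (intro mult_left_mono) (auto intro: order_trans[of _ "real k * X ^ (2 * k - 1)"])
  finally have "\<bar>\<eta>\<bar> * X \<le> \<epsilon> * \<bar>\<xi>\<bar>" .
  moreover have "\<xi> / \<eta> = \<bar>\<xi>\<bar> / \<bar>\<eta>\<bar>"
    using same_sign by (auto simp: sgn_real_def split: if_splits)
  ultimately show "X \<le> \<epsilon> * (\<xi> / \<eta>)"
    using \<eta> by (simp add: pos_le_divide_eq mult_ac)
qed

text \<open>Along the line \<open>x = sgn \<eta> * X\<close> the frequencies \<open>\<xi>\<close> near the stationary point \<open>2k x^(2k-1)\<close>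
  lie in any cone around \<open>(0, \<eta>)\<close>, and all others are non-stationary.\<close>

lemma stft_chirp_decay_along_line:
  assumes k: "k \<ge> 2" and u: "\<And>y. u y = exp (\<i> * complex_of_real (y ^ (2 * k)))"
    and f: "schwartz f" and \<eta>: "\<eta> \<noteq> 0" and \<Gamma>: "open \<Gamma>" "conic \<Gamma>" "(0, \<eta>) \<in> \<Gamma>"
    and C: "\<And>z. z \<in> \<Gamma> \<Longrightarrow> jbracket z ^ (2 * k) * norm (stft f u z) \<le> C"
  shows "\<exists>B R. R \<ge> 1 \<and> (\<forall>X\<ge>R. \<forall>\<xi>. norm (stft f u (sgn \<eta> * X, \<xi>)) \<le> B / X ^ (2 * k))"
proof -
  obtain \<epsilon> where \<epsilon>: "\<epsilon> > 0" and cone: "\<And>t x. t > 0 \<Longrightarrow> \<bar>x\<bar> \<le> \<epsilon> * t \<Longrightarrow> (x, t * \<eta>) \<in> \<Gamma>"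
    using open_conic_contains_narrow_cone[OF \<Gamma>] by blast
  obtain C2 R2 where R2: "R2 \<ge> 1" and C2: "\<And>x \<xi>. R2 \<le> \<bar>x\<bar> \<Longrightarrow> nonstationary k x \<xi> \<Longrightarrow>
      norm (osc_integral f k 0 0 x \<xi>) \<le> C2 / \<bar>x\<bar> ^ (2 * k)"
    using osc_integral_rapid_decay[OF f, of k 0 "2 * k"] k by auto
  define R where "R = max R2 (\<bar>\<eta>\<bar> / \<epsilon>)"
  have "norm (stft f u (x, \<xi>)) \<le> (\<bar>C\<bar> + \<bar>C2\<bar>) / X ^ (2 * k)"
    if X: "R \<le> X" and x: "x = sgn \<eta> * X" for x X \<xi>
  proof -
    have X1: "1 \<le> X" and X\<eta>: "\<bar>\<eta>\<bar> \<le> \<epsilon> * X"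
      using X R2 \<epsilon> by (auto simp: R_def pos_divide_le_eq mult.commute)
    have abs_x: "\<bar>x\<bar> = X"
      using X1 \<eta> by (simp add: x abs_mult)
    have "norm (stft f u (x, \<xi>)) \<le> max C C2 / X ^ (2 * k)"
    proof (cases "nonstationary k x \<xi>")
      case True
      then have "norm (stft f u (x, \<xi>)) \<le> C2 / X ^ (2 * k)"
        using C2[of x \<xi>] X abs_x by (simp add: stft_chirp(2)[OF u] R_def)
      also have "\<dots> \<le> max C C2 / X ^ (2 * k)"
        by (intro divide_right_mono) auto
      finally show ?thesis .
    next
      case False
      with stationary_frequency_in_narrow_cone[OF k \<eta> \<epsilon> X1 X\<eta>] have "(x, \<xi>) \<in> \<Gamma>"
        using cone[of "\<xi> / \<eta>" x] \<eta> abs_x x by simp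
      then have "X ^ (2 * k) * norm (stft f u (x, \<xi>)) \<le> C"
        using C abs_fst_le_jbracket[of x \<xi>] abs_x X1
        by (fastforce intro: order_trans[OF mult_right_mono[OF power_mono]])
      then have "norm (stft f u (x, \<xi>)) \<le> C / X ^ (2 * k)"
        using X1 by (simp add: field_simps)
      also have "\<dots> \<le> max C C2 / X ^ (2 * k)"
        by (intro divide_right_mono) auto
      finally show ?thesis .
    qed
    also have "\<dots> \<le> (\<bar>C\<bar> + \<bar>C2\<bar>) / X ^ (2 * k)"
      by (intro divide_right_mono) auto
    finally show ?thesis .
  qed
  moreover have "R \<ge> 1"
    using R2 by (simp add: R_def)
  ultimately show ?thesis by blast
qed

lemma norm_window_square_le_stft_bound:
  assumes u: "\<And>y. u y = exp (\<i> * complex_of_real (y ^ (2 * k)))" and f: "schwartz f"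
  obtains A where "A > 0"
    and "\<And>x B s0. 1 \<le> \<bar>x\<bar> \<Longrightarrow> (\<And>\<xi>. norm (stft f u (x, \<xi>)) \<le> B) \<Longrightarrow>
      (norm (f s0))\<^sup>2 \<le> 4 * (A * \<bar>x\<bar> ^ (2 * k - 1)) * B"
proof -
  obtain A where A: "A > 0" and lip: "\<And>x a b. 1 \<le> \<bar>x\<bar> \<Longrightarrow>
      norm (osc_integrand f k 0 0 x 0 a - osc_integrand f k 0 0 x 0 b) \<le> A * \<bar>x\<bar> ^ (2 * k - 1) * \<bar>a - b\<bar>"
    using osc_integrand_lipschitz[OF f] by blast
  have "(norm (f s0))\<^sup>2 \<le> 4 * (A * \<bar>x\<bar> ^ (2 * k - 1)) * B"
    if x: "1 \<le> \<bar>x\<bar>" and B: "\<And>\<xi>. norm (stft f u (x, \<xi>)) \<le> B" for x B s0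
  proof -
    have "(norm (f s0))\<^sup>2 = (norm (osc_integrand f k 0 0 x 0 (x + s0)))\<^sup>2"
      by (simp add: osc_integrand_def window_moment_def norm_mult)
    also have "\<dots> \<le> 4 * (A * \<bar>x\<bar> ^ (2 * k - 1)) * B"
    proof (rule norm_square_le_lipschitz_fourier_bound)
      show "osc_integrand f k 0 0 x 0 \<in> borel_measurable borel"
        using osc_integrand_continuous_on[OF f] by (rule borel_measurable_continuous_onI)
      show "integrable lborel (osc_integrand f k 0 0 x 0)"
        by (rule integrable_osc_integrand[OF f])
      show "norm (osc_integrand f k 0 0 x 0 a - osc_integrand f k 0 0 x 0 b) \<le> A * \<bar>x\<bar> ^ (2 * k - 1) * \<bar>a - b\<bar>" for a b
        by (rule lip[OF x])
      show "0 < A * \<bar>x\<bar> ^ (2 * k - 1)"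
        using A x by (auto simp: zero_less_mult_iff)
      show "norm (fourier_transform (osc_integrand f k 0 0 x 0) \<xi>) \<le> B" for \<xi>
        using B[of \<xi>] by (simp add: stft_chirp(1)[OF u])
    qed
    finally show ?thesis .
  qed
  with A show ?thesis by (rule that)
qed

lemma stft_chirp_not_decaying_along_line:
  assumes k: "k \<ge> 2" and u: "\<And>y. u y = exp (\<i> * complex_of_real (y ^ (2 * k)))"
    and f: "schwartz f" and f_nonzero: "f \<noteq> (\<lambda>_. 0)" and s: "\<bar>s\<bar> = 1"
  shows "\<not> (\<exists>B R. R \<ge> 1 \<and> (\<forall>X\<ge>R. \<forall>\<xi>. norm (stft f u (s * X, \<xi>)) \<le> B / X ^ (2 * k)))"
proof
  assume "\<exists>B R. R \<ge> 1 \<and> (\<forall>X\<ge>R. \<forall>\<xi>. norm (stft f u (s * X, \<xi>)) \<le> B / X ^ (2 * k))"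
  then obtain B R where R: "R \<ge> 1" and B: "\<And>X \<xi>. R \<le> X \<Longrightarrow> norm (stft f u (s * X, \<xi>)) \<le> B / X ^ (2 * k)"
    by blast
  obtain s0 where "f s0 \<noteq> 0"
    using f_nonzero by auto
  define m where "m = norm (f s0)"
  have m: "m > 0"
    using \<open>f s0 \<noteq> 0\<close> by (simp add: m_def)
  obtain A where A: "A > 0" and window: "\<And>x B s0. 1 \<le> \<bar>x\<bar> \<Longrightarrow> (\<And>\<xi>. norm (stft f u (x, \<xi>)) \<le> B) \<Longrightarrow>
      (norm (f s0))\<^sup>2 \<le> 4 * (A * \<bar>x\<bar> ^ (2 * k - 1)) * B"
    using norm_window_square_le_stft_bound[OF u f] by blast
  define X where "X = R + 4 * A * \<bar>B\<bar> / m\<^sup>2"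
  have X: "R \<le> X"
    using A m by (simp add: X_def)
  have "m\<^sup>2 \<le> 4 * (A * X ^ (2 * k - 1)) * (B / X ^ (2 * k))"
    using window[of "s * X" "B / X ^ (2 * k)" s0] B[OF X] X R s by (simp add: m_def abs_mult)
  also have "\<dots> = 4 * A * B / X"
  proof -
    have "X ^ (2 * k) = X * X ^ (2 * k - 1)"
      using k by (simp flip: power_Suc)
    then show ?thesis
      using X R by (simp add: field_simps)
  qed
  finally have "m\<^sup>2 * X \<le> 4 * A * \<bar>B\<bar>"
    using X R A by (simp add: field_simps) (smt (verit) mult_left_mono abs_ge_self)
  moreover have "4 * A * \<bar>B\<bar> < m\<^sup>2 * X"
    using X R m by (simp add: X_def field_simps)
  ultimately show False by simp
qed

lemma fst_zero_in_gabor_WF: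
  assumes k: "k \<ge> 2" and u: "\<And>y. u y = exp (\<i> * complex_of_real (y ^ (2 * k)))"
    and f: "schwartz f" and f_nonzero: "f \<noteq> (\<lambda>_. 0)" and \<eta>: "\<eta> \<noteq> 0"
  shows "(0, \<eta>) \<in> gabor_WF f u"
proof -
  have "\<not> (\<exists>\<Gamma>. open \<Gamma> \<and> conic \<Gamma> \<and> (0, \<eta>) \<in> \<Gamma> \<and>
      (\<forall>N\<ge>0. \<exists>C. \<forall>z\<in>\<Gamma>. jbracket z powr N * norm (stft f u z) \<le> C))"
  proof
    assume "\<exists>\<Gamma>. open \<Gamma> \<and> conic \<Gamma> \<and> (0, \<eta>) \<in> \<Gamma> \<and> (\<forall>N\<ge>0. \<exists>C. \<forall>z\<in>\<Gamma>. jbracket z powr N * norm (stft f u z) \<le> C)"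
    then obtain \<Gamma> C where \<Gamma>: "open \<Gamma>" "conic \<Gamma>" "(0, \<eta>) \<in> \<Gamma>"
      and C: "\<And>z. z \<in> \<Gamma> \<Longrightarrow> jbracket z powr real (2 * k) * norm (stft f u z) \<le> C"
      by (metis of_nat_0_le_iff)
    have "jbracket z ^ (2 * k) * norm (stft f u z) \<le> C" if "z \<in> \<Gamma>" for z
    proof -
      have "jbracket z powr real (2 * k) = jbracket z ^ (2 * k)"
        using one_le_jbracket[of z] by (intro powr_realpow) simp
      with C[OF that] show ?thesis
        by simp
    qed
    from stft_chirp_decay_along_line[OF k u f \<eta> \<Gamma> this]
      stft_chirp_not_decaying_along_line[OF k u f f_nonzero, of "sgn \<eta>"] \<eta>
    show False by (simp add: abs_sgn)
  qed
  moreover have "(0, \<eta>) \<noteq> 0"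
    using \<eta> by (simp add: zero_prod_def)
  ultimately show ?thesis
    unfolding gabor_WF_def jbracket_def[symmetric] by blast
qed

theorem corollary8p3:
  fixes k :: nat and \<phi> u :: "real \<Rightarrow> complex"
  assumes "k \<ge> 2"
    and "\<And>x. u x = exp (\<i> * complex_of_real (x ^ (2 * k)))"
    and "schwartz \<phi>" and "\<phi> \<noteq> (\<lambda>_. 0)"
  shows "gabor_WF \<phi> u = {0} \<times> (UNIV - {0})"
proof
  show "gabor_WF \<phi> u \<subseteq> {0} \<times> (UNIV - {0})"
  proof (clarify)
    fix x \<xi> assume z: "(x, \<xi>) \<in> gabor_WF \<phi> u"
    then have "x = 0"
      using fst_nonzero_not_in_gabor_WF[OF assms(1-3)] by blast
    moreover have "(x, \<xi>) \<noteq> 0"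
      using z by (simp add: gabor_WF_def)
    ultimately show "x \<in> {0} \<and> \<xi> \<in> UNIV - {0}"
      by (simp add: zero_prod_def)
  qed
  show "{0} \<times> (UNIV - {0}) \<subseteq> gabor_WF \<phi> u"
    using fst_zero_in_gabor_WF[OF assms] by auto
qed

end
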